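(* Let $d\ge3$, $n_1,\dots,n_d,k$ positive integers, $\mathfrak{L}$ an invertible linear transform as in the context, $\tau>0$, $0<p<1$ and $w=(w_{i,j})$ nonnegative weights. Let $\boldsymbol{\mathcal{A}}=\boldsymbol{\mathcal{Q}}*_{\mathfrak{L}}\boldsymbol{\mathcal{B}}\in\mathbb{R}^{n_1\times n_2\times n_3\times\cdots\times n_d}$, where $\boldsymbol{\mathcal{Q}}\in\mathbb{R}^{n_1\times k\times n_3\times\cdots\times n_d}$ is partially orthogonal and $\boldsymbol{\mathcal{B}}\in\mathbb{R}^{k\times n_2\times n_3\times\cdots\times n_d}$. Then $$\boldsymbol{\mathcal{D}}_{\boldsymbol{\mathcal{W}},p,\tau}(\boldsymbol{\mathcal{A}})=\boldsymbol{\mathcal{Q}}*_{\mathfrak{L}}\boldsymbol{\mathcal{D}}_{\boldsymbol{\mathcal{W}},p,\tau}(\boldsymbol{\mathcal{B}}).$$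
   Context: Transform: for $i=3,\dots,d$ let $\bm U_{n_i}\in\mathbb{C}^{n_i\times n_i}$ satisfy $\bm U_{n_i}\bm U_{n_i}^H=\bm U_{n_i}^H\bm U_{n_i}=\alpha_i\bm I_{n_i}$, $\alpha_i>0$. For a tensor $\boldsymbol{\mathcal{A}}$ of size $m_1\times m_2\times n_3\times\cdots\times n_d$, $\mathfrak{L}(\boldsymbol{\mathcal{A}})=\boldsymbol{\mathcal{A}}\times_3\bm U_{n_3}\cdots\times_d\bm U_{n_d}$ (mode-$k$ product $\boldsymbol{\mathcal{B}}=\boldsymbol{\mathcal{A}}\times_k\bm M$ iff $\bm B_{(k)}=\bm M\bm A_{(k)}$), with inverse $\mathfrak{L}^{-1}$. Frontal slices $\boldsymbol{\mathcal{A}}^{<j>}=\boldsymbol{\mathcal{A}}(:,:,i_3,\dots,i_d)$, $j=i_3+\sum_{a=4}^d(i_a-1)\prod_{b=3}^{a-1}n_b\in\{1,\dots,N\}$, $N=n_3\cdots n_d$. t-product: $\boldsymbol{\mathcal{C}}=\boldsymbol{\mathcal{A}}*_{\mathfrak{L}}\boldsymbol{\mathcal{B}}$ iff $\mathfrak{L}(\boldsymbol{\mathcal{C}})^{<j>}=\mathfrak{L}(\boldsymbol{\mathcal{A}})^{<j>}\mathfrak{L}(\boldsymbol{\mathcal{B}})^{<j>}$ for all $j$. Transpose: $\mathfrak{L}(\boldsymbol{\mathcal{A}}^T)^{<j>}=(\mathfrak{L}(\boldsymbol{\mathcal{A}})^{<j>})^H$. Identity tensor: $\mathfrak{L}(\boldsymbol{\mathcal{I}})^{<j>}=\bm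 I$ for all $j$. $\boldsymbol{\mathcal{Q}}$ is partially orthogonal if $\boldsymbol{\mathcal{Q}}^T*_{\mathfrak{L}}\boldsymbol{\mathcal{Q}}=\boldsymbol{\mathcal{I}}$, orthogonal if also $\boldsymbol{\mathcal{Q}}*_{\mathfrak{L}}\boldsymbol{\mathcal{Q}}^T=\boldsymbol{\mathcal{I}}$. f-diagonal: all frontal slices diagonal. T-SVD: $\boldsymbol{\mathcal{A}}=\boldsymbol{\mathcal{U}}*_{\mathfrak{L}}\boldsymbol{\mathcal{S}}*_{\mathfrak{L}}\boldsymbol{\mathcal{V}}^T$, $\boldsymbol{\mathcal{U}},\boldsymbol{\mathcal{V}}$ orthogonal, $\boldsymbol{\mathcal{S}}$ f-diagonal, obtained from slice-wise SVDs of $\mathfrak{L}(\boldsymbol{\mathcal{A}})^{<j>}$ with singular values in non-increasing order. GST: for $s\in\mathbb{R}$, $w\ge0$, $0<p<1$, $\delta=[2w(1-p)]^{\frac1{2-p}}+wp[2w(1-p)]^{\frac{p-1}{2-p}}$; $\mathrm{GST}(s,w,p)=0$ if $|s|\le\delta$, else $\mathrm{sign}(s)\hat\alpha^*$ with $\hat\alpha^*$ the largest positive root of $\alpha+wp\alpha^{p-1}=|s|$; $\mathrm{GST}(s,0,p)=s$. GTSVT: for a tensor $\boldsymbol{\mathcal{A}}$ of size $m_1\times m_2\times n_3\times\cdots\times n_d$ with T-SVD $\boldsymbol{\mathcal{U}}*_{\mathfrak{L}}\boldsymbol{\mathcal{S}}*_{\mathfrak{L}}\boldsymbol{\mathcal{V}}^T$,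 $\boldsymbol{\mathcal{D}}_{\boldsymbol{\mathcal{W}},p,\tau}(\boldsymbol{\mathcal{A}})=\boldsymbol{\mathcal{U}}*_{\mathfrak{L}}\mathfrak{L}^{-1}(\hat{\boldsymbol{\mathcal{S}}})*_{\mathfrak{L}}\boldsymbol{\mathcal{V}}^T$, where $\hat{\boldsymbol{\mathcal{S}}}$ is f-diagonal with $\hat{\boldsymbol{\mathcal{S}}}^{<j>}(i,i)=\mathrm{GST}\big(\mathfrak{L}(\boldsymbol{\mathcal{S}})^{<j>}(i,i),\tau w_{i,j},p\big)$ for $i\le\min(m_1,m_2)$; here $\boldsymbol{\mathcal{W}}$ denotes the f-diagonal weight tensor with $\boldsymbol{\mathcal{W}}^{<j>}(i,i)=w_{i,j}$, the same weights $w_{i,j}$ being used regardless of the first two dimensions of the argument. *)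

theory Defs
  imports Complex_Main "Jordan_Normal_Form.Matrix"
begin

(* Tensors of size m1 x m2 x n3 x ... x nd are represented as maps from a
   frontal-slice multi-index [i3,...,id] (0-based, i_a < n_a) to the frontal
   slice, an m1 x m2 complex matrix.  ns = [n3,...,nd].  Outside the valid
   index range the value is normalised to the junk value 0_m 0 0. *)

type_synonym tensor = "nat list \<Rightarrow> complex mat"

definition valid_idx :: "nat list \<Rightarrow> nat list \<Rightarrow> bool" where
  "valid_idx ns idx \<longleftrightarrow> length idx = length ns \<and> (\<forall>a<length ns. idx ! a < ns ! a)"

definition is_tensor :: "nat \<Rightarrow> nat \<Rightarrow> nat list \<Rightarrow> tensor \<Rightarrow> bool" where
  "is_tensor m1 m2 ns A \<longleftrightarrow>
     (\<forall>idx. if valid_idx ns idx then A idx \<in> carrier_mat m1 m2 else A idx = 0\<^sub>m 0 0)"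

definition real_tensor :: "nat list \<Rightarrow> tensor \<Rightarrow> bool" where
  "real_tensor ns A \<longleftrightarrow>
     (\<forall>idx. valid_idx ns idx \<longrightarrow>
        (\<forall>i<dim_row (A idx). \<forall>j<dim_col (A idx). A idx $$ (i,j) \<in> \<real>))"

(* 0-based linear frontal-slice index: j - 1 in the paper's notation *)
definition lin_idx :: "nat list \<Rightarrow> nat list \<Rightarrow> nat" where
  "lin_idx ns idx = (\<Sum>a<length ns. idx ! a * (\<Prod>b<a. ns ! b))"

definition ctrans :: "complex mat \<Rightarrow> complex mat" where
  "ctrans M = mat (dim_col M) (dim_row M) (\<lambda>(i,j). cnj (M $$ (j,i)))"

definition unitary_mat :: "nat \<Rightarrow> complex mat \<Rightarrow> bool" where
  "unitary_mat n U \<longleftrightarrow> U \<in> carrier_mat n n \<and> U * ctrans U = 1\<^sub>m n \<and> ctrans U * U = 1\<^sub>m n"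

definition inv_mat :: "complex mat \<Rightarrow> complex mat" where
  "inv_mat U = (THE M. M \<in> carrier_mat (dim_row U) (dim_row U) \<and>
                       U * M = 1\<^sub>m (dim_row U) \<and> M * U = 1\<^sub>m (dim_row U))"

(* mode-(a+3) product  A \<times>_(a+3) M :  B_(a+3) = M A_(a+3) *)
definition mode_prod :: "nat list \<Rightarrow> nat \<Rightarrow> complex mat \<Rightarrow> tensor \<Rightarrow> tensor" where
  "mode_prod ns a M A = (\<lambda>idx. if valid_idx ns idx then
      mat (dim_row (A idx)) (dim_col (A idx))
        (\<lambda>(r,c). \<Sum>l<ns ! a. M $$ (idx ! a, l) * A (idx[a := l]) $$ (r,c))
      else 0\<^sub>m 0 0)"

definition transf :: "nat list \<Rightarrow> complex mat list \<Rightarrow> tensor \<Rightarrow> tensor" where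
  "transf ns Us A = foldl (\<lambda>T a. mode_prod ns a (Us ! a) T) A [0..<length ns]"

definition transf_inv :: "nat list \<Rightarrow> complex mat list \<Rightarrow> tensor \<Rightarrow> tensor" where
  "transf_inv ns Us A = foldl (\<lambda>T a. mode_prod ns a (inv_mat (Us ! a)) T) A (rev [0..<length ns])"

definition tprod :: "nat list \<Rightarrow> complex mat list \<Rightarrow> tensor \<Rightarrow> tensor \<Rightarrow> tensor" where
  "tprod ns Us A B = transf_inv ns Us
     (\<lambda>idx. if valid_idx ns idx then transf ns Us A idx * transf ns Us B idx else 0\<^sub>m 0 0)"

definition ttrans :: "nat list \<Rightarrow> complex mat list \<Rightarrow> tensor \<Rightarrow> tensor" where
  "ttrans ns Us A = transf_inv ns Us
     (\<lambda>idx. if valid_idx ns idx then ctrans (transf ns Us A idx) else 0\<^sub>m 0 0)"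

definition tident :: "nat list \<Rightarrow> complex mat list \<Rightarrow> nat \<Rightarrow> tensor" where
  "tident ns Us m = transf_inv ns Us (\<lambda>idx. if valid_idx ns idx then 1\<^sub>m m else 0\<^sub>m 0 0)"

definition part_orth :: "nat list \<Rightarrow> complex mat list \<Rightarrow> nat \<Rightarrow> tensor \<Rightarrow> bool" where
  "part_orth ns Us k Q \<longleftrightarrow> tprod ns Us (ttrans ns Us Q) Q = tident ns Us k"

definition torth :: "nat list \<Rightarrow> complex mat list \<Rightarrow> nat \<Rightarrow> tensor \<Rightarrow> bool" where
  "torth ns Us m Q \<longleftrightarrow> tprod ns Us (ttrans ns Us Q) Q = tident ns Us m \<and>
                      tprod ns Us Q (ttrans ns Us Q) = tident ns Us m"

definition f_diagonal :: "nat list \<Rightarrow> tensor \<Rightarrow> bool" where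
  "f_diagonal ns S \<longleftrightarrow> (\<forall>idx. valid_idx ns idx \<longrightarrow> diagonal_mat (S idx))"

definition is_tsvd :: "nat list \<Rightarrow> complex mat list \<Rightarrow> nat \<Rightarrow> nat \<Rightarrow> tensor \<Rightarrow>
    tensor \<Rightarrow> tensor \<Rightarrow> tensor \<Rightarrow> bool" where
  "is_tsvd ns Us m1 m2 A U S V \<longleftrightarrow>
     is_tensor m1 m1 ns U \<and> is_tensor m1 m2 ns S \<and> is_tensor m2 m2 ns V \<and>
     torth ns Us m1 U \<and> torth ns Us m2 V \<and> f_diagonal ns S \<and>
     A = tprod ns Us (tprod ns Us U S) (ttrans ns Us V) \<and>
     (\<forall>idx. valid_idx ns idx \<longrightarrow>
        unitary_mat m1 (transf ns Us U idx) \<and> unitary_mat m2 (transf ns Us V idx) \<and>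
        diagonal_mat (transf ns Us S idx) \<and>
        transf ns Us A idx = transf ns Us U idx * transf ns Us S idx * ctrans (transf ns Us V idx) \<and>
        (\<forall>i<min m1 m2. transf ns Us S idx $$ (i,i) \<in> \<real> \<and> 0 \<le> Re (transf ns Us S idx $$ (i,i))) \<and>
        (\<forall>i i'. i \<le> i' \<and> i' < min m1 m2 \<longrightarrow>
           Re (transf ns Us S idx $$ (i',i')) \<le> Re (transf ns Us S idx $$ (i,i))))"

definition gst_delta :: "real \<Rightarrow> real \<Rightarrow> real" where
  "gst_delta w p = (2*w*(1-p)) powr (1/(2-p)) + w*p*(2*w*(1-p)) powr ((p-1)/(2-p))"

definition GST :: "real \<Rightarrow> real \<Rightarrow> real \<Rightarrow> real" where
  "GST s w p = (if w = 0 then s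
     else if \<bar>s\<bar> \<le> gst_delta w p then 0
     else sgn s * (GREATEST a. a > 0 \<and> a + w*p*a powr (p-1) = \<bar>s\<bar>))"

(* X is a value of D_{W,p,tau}(A) computed from some T-SVD of the m1 x m2 x ... tensor A;
   w i j is the weight w_{i+1,j+1} of the paper (0-based indices). *)
definition is_gtsvt :: "nat list \<Rightarrow> complex mat list \<Rightarrow> (nat \<Rightarrow> nat \<Rightarrow> real) \<Rightarrow> real \<Rightarrow> real \<Rightarrow>
    nat \<Rightarrow> nat \<Rightarrow> tensor \<Rightarrow> tensor \<Rightarrow> bool" where
  "is_gtsvt ns Us w p \<tau> m1 m2 A X \<longleftrightarrow>
     (\<exists>U S V. is_tsvd ns Us m1 m2 A U S V \<and>
        X = tprod ns Us (tprod ns Us U (transf_inv ns Us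
              (\<lambda>idx. if valid_idx ns idx then
                 mat m1 m2 (\<lambda>(r,c). if r = c then
                   complex_of_real (GST (Re (transf ns Us S idx $$ (r,r))) (\<tau> * w r (lin_idx ns idx)) p)
                   else 0)
               else 0\<^sub>m 0 0))) (ttrans ns Us V))"

end

(* Under the transform L, the t-product, the transpose and the T-SVD all act frontal slice by
   frontal slice, so the theorem reduces to matrices: for an isometry Q (Q^H Q = I) and any B, the
   SVDs of Q B and of B correspond to each other with the same right factor V. Given
   B = U' S' V^H, the columns of Q U' are orthonormal and complete to a unitary U, and S' is padded
   by zero rows. Conversely, given Q B = U S V^H, every column of U that meets a nonzero singular
   value lies in the range of Q, so Q^H U is orthonormal on these columns and completes to a
   unitary U', while S is truncated. Because the weights are nonnegative, thresholding maps the
   singular value 0 to 0; hence the columns meeting zero singular values never contribute, and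
   U D(S) V^H = Q U' D(S') V^H. As a T-SVD is not unique, the statement compares the sets of all
   values of the thresholding operator. *)

theory Submission
  imports Defs "Jordan_Normal_Form.Determinant"
begin

section \<open>Conjugate transpose and isometries\<close>

lemma ctrans_dims [simp]: "dim_row (ctrans A) = dim_col A" "dim_col (ctrans A) = dim_row A"
  unfolding ctrans_def by simp_all

lemma index_ctrans [simp]: "i < dim_col A \<Longrightarrow> j < dim_row A \<Longrightarrow> ctrans A $$ (i,j) = cnj (A $$ (j,i))"
  unfolding ctrans_def by simp

lemma ctrans_carrier_mat [simp]: "A \<in> carrier_mat n m \<Longrightarrow> ctrans A \<in> carrier_mat m n"
  unfolding ctrans_def carrier_mat_def by simp

lemma index_mult_mat_sum:
  "A \<in> carrier_mat n m \<Longrightarrow> B \<in> carrier_mat m q \<Longrightarrow> i < n \<Longrightarrow> j < q \<Longrightarrow>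
   (A * B) $$ (i,j) = (\<Sum>l<m. A $$ (i,l) * B $$ (l,j))"
  by (simp add: scalar_prod_def atLeast0LessThan)

lemma index_ctrans_mult_sum:
  "A \<in> carrier_mat n m \<Longrightarrow> B \<in> carrier_mat n q \<Longrightarrow> i < m \<Longrightarrow> j < q \<Longrightarrow>
   (ctrans A * B) $$ (i,j) = (\<Sum>l<n. cnj (A $$ (l,i)) * B $$ (l,j))"
  by (subst index_mult_mat_sum[of _ m n _ q]) auto

lemma ctrans_mult:
  assumes A: "A \<in> carrier_mat n m" and B: "B \<in> carrier_mat m q"
  shows "ctrans (A * B) = ctrans B * ctrans A"
proof (rule eq_matI)
  fix i j assume "i < dim_row (ctrans B * ctrans A)" "j < dim_col (ctrans B * ctrans A)"
  then have ij: "i < q" "j < n" using A B by auto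
  have "ctrans (A * B) $$ (i,j) = cnj (\<Sum>l<m. A $$ (j,l) * B $$ (l,i))"
    using A B ij by (simp add: index_mult_mat_sum[OF A B ij(2,1)])
  also have "\<dots> = (\<Sum>l<m. ctrans B $$ (i,l) * ctrans A $$ (l,j))"
    unfolding cnj_sum using A B ij by (intro sum.cong) (auto simp: mult.commute)
  also have "\<dots> = (ctrans B * ctrans A) $$ (i,j)"
    using A B ij
      by (simp add: index_mult_mat_sum[OF ctrans_carrier_mat[OF B] ctrans_carrier_mat[OF A] ij])
  finally show "ctrans (A * B) $$ (i,j) = (ctrans B * ctrans A) $$ (i,j)" .
qed (use A B in auto)

lemma isometry_mult:
  assumes Q: "Q \<in> carrier_mat n m" and QQ: "ctrans Q * Q = 1\<^sub>m m"
    and X: "X \<in> carrier_mat m q"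
  shows "ctrans (Q * X) * (Q * X) = ctrans X * X"
proof -
  have "ctrans (Q * X) * (Q * X) = ctrans X * ctrans Q * (Q * X)"
    by (simp add: ctrans_mult[OF Q X])
  also have "\<dots> = ctrans X * (ctrans Q * Q * X)"
    using Q X by (simp add: assoc_mult_mat[of _ q m _ n _ q] assoc_mult_mat[of _ m n _ m _ q])
  finally show ?thesis using QQ X by simp
qed

lemma assoc_mult_mat3:
  assumes "A \<in> carrier_mat n a" "X \<in> carrier_mat a b" "Y \<in> carrier_mat b c" "Z \<in> carrier_mat c d"
  shows "A * (X * Y * Z) = A * X * Y * Z"
  using assms by (simp add: assoc_mult_mat[of A n a "X * Y" c Z d] assoc_mult_mat[of A n a X b Y c])

definition take_cols :: "nat \<Rightarrow> 'a mat \<Rightarrow> 'a mat" where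
  "take_cols r X = mat (dim_row X) r (\<lambda>(i,j). X $$ (i,j))"

lemma take_cols_carrier_mat [simp]: "take_cols r X \<in> carrier_mat (dim_row X) r"
  unfolding take_cols_def by simp

lemma take_cols_dims [simp]: "dim_row (take_cols r X) = dim_row X" "dim_col (take_cols r X) = r"
  unfolding take_cols_def by simp_all

lemma index_take_cols [simp]: "i < dim_row X \<Longrightarrow> j < r \<Longrightarrow> take_cols r X $$ (i,j) = X $$ (i,j)"
  unfolding take_cols_def by simp

lemma col_take_cols [simp]: "j < r \<Longrightarrow> col (take_cols r X) j = col X j"
  unfolding take_cols_def by (auto simp: col_def)

lemma take_cols_mult:
  assumes "A \<in> carrier_mat n m" "X \<in> carrier_mat m a" "r \<le> a"
  shows "take_cols r (A * X) = A * take_cols r X"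
  using assms by (intro eq_matI) auto

lemma isometry_take_cols:
  assumes X: "X \<in> carrier_mat n a" and XX: "ctrans X * X = 1\<^sub>m a" and r: "r \<le> a"
  shows "ctrans (take_cols r X) * take_cols r X = 1\<^sub>m r"
proof (rule eq_matI)
  have T: "take_cols r X \<in> carrier_mat n r" using X take_cols_carrier_mat[of r X] by simp
  fix i j assume "i < dim_row (1\<^sub>m r)" "j < dim_col (1\<^sub>m r)"
  then have ij: "i < r" "j < r" by auto
  have "(ctrans (take_cols r X) * take_cols r X) $$ (i,j) = (ctrans X * X) $$ (i,j)"
    using X ij r
      by (simp add: index_ctrans_mult_sum[OF T T ij] index_ctrans_mult_sum[OF X X]
          del: index_mult_mat)
  then show "(ctrans (take_cols r X) * take_cols r X) $$ (i,j) = 1\<^sub>m r $$ (i,j)"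
    using XX ij r by simp
qed (use X in auto)

lemma isometry_dim_le:
  assumes C: "C \<in> carrier_mat n m" and CC: "ctrans C * C = 1\<^sub>m m"
  shows "m \<le> n"
proof (rule ccontr)
  assume "\<not> m \<le> n"
  then have nm: "n < m" by simp
  \<comment> \<open>padded by zero rows, C becomes a square isometry, which then also has orthonormal rows\<close>
  define D where "D = mat m m (\<lambda>(i,j). if i < n then C $$ (i,j) else 0)"
  have D: "D \<in> carrier_mat m m" unfolding D_def by simp
  have "ctrans D * D = 1\<^sub>m m"
  proof (rule eq_matI)
    fix i j assume "i < dim_row (1\<^sub>m m)" "j < dim_col (1\<^sub>m m)"
    then have ij: "i < m" "j < m" by auto
    have "(ctrans D * D) $$ (i,j) = (\<Sum>l<m. cnj (D $$ (l,i)) * D $$ (l,j))"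
      by (rule index_ctrans_mult_sum[OF D D ij])
    also have "\<dots> = (\<Sum>l<n. cnj (C $$ (l,i)) * C $$ (l,j))"
      by (rule sum.mono_neutral_cong_right) (use nm ij in \<open>auto simp: D_def\<close>)
    also have "\<dots> = (ctrans C * C) $$ (i,j)" by (rule index_ctrans_mult_sum[OF C C ij, symmetric])
    finally show "(ctrans D * D) $$ (i,j) = 1\<^sub>m m $$ (i,j)" using CC by simp
  qed (use D in auto)
  then have "D * ctrans D = 1\<^sub>m m"
    by (rule mat_mult_left_right_inverse[OF ctrans_carrier_mat[OF D] D])
  moreover have "(D * ctrans D) $$ (n,n) = (\<Sum>l<m. D $$ (n,l) * ctrans D $$ (l,n))"
    by (rule index_mult_mat_sum[OF D ctrans_carrier_mat[OF D] nm nm])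
  moreover have "\<dots> = 0"
    using nm D by (intro sum.neutral) (simp add: D_def)
  ultimately show False using nm by simp
qed

lemma isometry_inner_cols:
  assumes C: "C \<in> carrier_mat n m" and CC: "ctrans C * C = 1\<^sub>m m" and "r < m" "t < m"
  shows "(\<Sum>l<n. cnj (C $$ (l,r)) * C $$ (l,t)) = (if r = t then 1 else 0)"
  using index_ctrans_mult_sum[OF C C assms(3,4)] CC assms(3,4) by simp

lemma isometry_orthogonal_unit_vector:
  assumes C: "C \<in> carrier_mat n m" and CC: "ctrans C * C = 1\<^sub>m m" and mn: "m < n"
  obtains x :: "nat \<Rightarrow> complex"
  where "(\<Sum>i<n. cnj (x i) * x i) = 1" "\<And>r. r < m \<Longrightarrow> (\<Sum>i<n. cnj (C $$ (i,r)) * x i) = 0"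
proof -
  \<comment> \<open>P = I - C C^H projects onto the orthogonal complement of the columns of C; its trace
      is n - m \<noteq> 0, so one of its columns is nonzero, and we normalise that column\<close>
  define P where "P i j = (if i = j then 1 else 0) - (\<Sum>r<m. C $$ (i,r) * cnj (C $$ (j,r)))" for i j
  have "(\<Sum>i<n. P i i) = (\<Sum>i<n. 1) - (\<Sum>r<m. \<Sum>i<n. cnj (C $$ (i,r)) * C $$ (i,r))"
    unfolding P_def by (simp add: sum_subtractf sum.swap[of _ "{..<n}"] mult.commute)
  also have "\<dots> = of_nat n - of_nat m"
    using isometry_inner_cols[OF C CC] by simp
  finally have "(\<Sum>i<n. P i i) \<noteq> 0" using mn by simp
  then obtain j0 where j0: "j0 < n" "P j0 j0 \<noteq> 0"
    by (metis (no_types, lifting) lessThan_iff sum.neutral)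
  define y where "y i = P i j0" for i
  have y_orth: "(\<Sum>i<n. cnj (C $$ (i,r)) * y i) = 0" if r: "r < m" for r
  proof -
    have "(\<Sum>i<n. cnj (C $$ (i,r)) * y i) = (\<Sum>i<n. cnj (C $$ (i,r)) * (if i = j0 then 1 else 0))
         - (\<Sum>s<m. (\<Sum>i<n. cnj (C $$ (i,r)) * C $$ (i,s)) * cnj (C $$ (j0,s)))"
      unfolding y_def P_def
      by (simp add: sum_subtractf right_diff_distrib sum_distrib_left sum_distrib_right
          sum.swap[of _ "{..<n}"] mult.assoc)
    also have "(\<Sum>i<n. cnj (C $$ (i,r)) * (if i = j0 then 1 else 0)) = cnj (C $$ (j0,r))"
      using j0 by (simp add: if_distrib sum.delta' cong: if_cong)
    also have "(\<Sum>s<m. (\<Sum>i<n. cnj (C $$ (i,r)) * C $$ (i,s)) * cnj (C $$ (j0,s)))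
        = (\<Sum>s<m. if r = s then cnj (C $$ (j0,s)) else 0)"
      using isometry_inner_cols[OF C CC r] by (intro sum.cong) auto
    finally show ?thesis using r by simp
  qed
  define N where "N = (\<Sum>i<n. cmod (y i) ^ 2)"
  have "0 < cmod (y j0) ^ 2" using j0 unfolding y_def by simp
  then have N: "N > 0" unfolding N_def using j0 by (intro sum_pos2[of _ j0]) auto
  have yy: "(\<Sum>i<n. cnj (y i) * y i) = complex_of_real N"
    unfolding N_def of_real_sum
      by (intro sum.cong) (simp_all add: complex_norm_square[symmetric] mult.commute)
  define x where "x i = y i / complex_of_real (sqrt N)" for i
  have "(\<Sum>i<n. cnj (x i) * x i) = (\<Sum>i<n. cnj (y i) * y i) / complex_of_real N"
    unfolding x_def using N by (simp add: sum_divide_distrib flip: of_real_mult)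
  also have "\<dots> = 1" unfolding yy using N by simp
  finally have "(\<Sum>i<n. cnj (x i) * x i) = 1" .
  moreover have "(\<Sum>i<n. cnj (C $$ (i,r)) * x i) = 0" if "r < m" for r
    using y_orth[OF that] unfolding x_def by (simp add: sum_divide_distrib[symmetric])
  ultimately show ?thesis using that by blast
qed

lemma isometry_extends_to_unitary:
  assumes C: "C \<in> carrier_mat n m" and CC: "ctrans C * C = 1\<^sub>m m"
  obtains U where "unitary_mat n U" "take_cols m U = C"
proof -
  have "m \<le> n" by (rule isometry_dim_le[OF C CC])
  then have "\<forall>C. C \<in> carrier_mat n m \<longrightarrow> ctrans C * C = 1\<^sub>m m \<longrightarrow>
    (\<exists>U. unitary_mat n U \<and> take_cols m U = C)"
  proof (induction m rule: inc_induct)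
    case base
    show ?case
    proof (intro allI impI)
      fix C assume C: "C \<in> carrier_mat n n" and CC: "ctrans C * C = 1\<^sub>m n"
      have "C * ctrans C = 1\<^sub>m n"
        by (rule mat_mult_left_right_inverse[OF ctrans_carrier_mat[OF C] C CC])
      moreover have "take_cols n C = C" using C by (intro eq_matI) auto
      ultimately show "\<exists>U. unitary_mat n U \<and> take_cols n U = C"
        using C CC unfolding unitary_mat_def by blast
    qed
  next
    case (step m)
    show ?case
    proof (intro allI impI)
      fix C assume C: "C \<in> carrier_mat n m" and CC: "ctrans C * C = 1\<^sub>m m"
      obtain x where x_unit: "(\<Sum>i<n. cnj (x i) * x i) = 1"
        and x_orth: "\<And>r. r < m \<Longrightarrow> (\<Sum>i<n. cnj (C $$ (i,r)) * x i) = 0"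
        using isometry_orthogonal_unit_vector[OF C CC \<open>m < n\<close>] by blast
      have x_orth': "(\<Sum>i<n. cnj (x i) * C $$ (i,r)) = 0" if "r < m" for r
        using arg_cong[OF x_orth[OF that], of cnj] by (simp add: cnj_sum mult.commute)
      define D where "D = mat n (Suc m) (\<lambda>(i,j). if j < m then C $$ (i,j) else x i)"
      have D: "D \<in> carrier_mat n (Suc m)" unfolding D_def by simp
      have "ctrans D * D = 1\<^sub>m (Suc m)"
      proof (rule eq_matI)
        fix a b assume "a < dim_row (1\<^sub>m (Suc m))" "b < dim_col (1\<^sub>m (Suc m))"
        then have ab: "a < Suc m" "b < Suc m" by auto
        have "(ctrans D * D) $$ (a,b) = (\<Sum>l<n. cnj (D $$ (l,a)) * D $$ (l,b))"
          by (rule index_ctrans_mult_sum[OF D D ab])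
        also have "\<dots> = 1\<^sub>m (Suc m) $$ (a,b)"
          using ab isometry_inner_cols[OF C CC] x_unit x_orth x_orth'
          by (cases "a < m"; cases "b < m") (auto simp: D_def less_Suc_eq)
        finally show "(ctrans D * D) $$ (a,b) = 1\<^sub>m (Suc m) $$ (a,b)" .
      qed (use D in auto)
      then obtain U where U: "unitary_mat n U" "take_cols (Suc m) U = D"
        using step.IH D by blast
      have Uc: "U \<in> carrier_mat n n" using U(1) unfolding unitary_mat_def by blast
      have "U $$ (i,j) = C $$ (i,j)" if "i < n" "j < m" for i j
      proof -
        have "U $$ (i,j) = take_cols (Suc m) U $$ (i,j)" using that Uc by simp
        then show ?thesis unfolding U(2) using that by (simp add: D_def)
      qed
      then have "take_cols m U = C" using C Uc by (intro eq_matI) auto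
      with U(1) show "\<exists>U. unitary_mat n U \<and> take_cols m U = C" by blast
    qed
  qed
  then show ?thesis using C CC that by blast
qed

lemma mult_eq_by_leading_part:
  assumes X: "X \<in> carrier_mat n a" and X': "X' \<in> carrier_mat n a'"
    and M: "M \<in> carrier_mat a q" and M': "M' \<in> carrier_mat a' q"
    and r: "r \<le> a" "r \<le> a'"
    and cols: "take_cols r X = take_cols r X'"
    and rows: "\<And>i j. i < r \<Longrightarrow> j < q \<Longrightarrow> M $$ (i,j) = M' $$ (i,j)"
    and tail: "\<And>i j. r \<le> i \<Longrightarrow> i < a \<Longrightarrow> j < q \<Longrightarrow> M $$ (i,j) = 0"
    and tail': "\<And>i j. r \<le> i \<Longrightarrow> i < a' \<Longrightarrow> j < q \<Longrightarrow> M' $$ (i,j) = 0"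
  shows "X * M = X' * M'"
proof -
  have leading: "(Y * N) $$ (i,j) = (\<Sum>l<r. take_cols r Y $$ (i,l) * N $$ (l,j))"
    if Y: "Y \<in> carrier_mat n b" and N: "N \<in> carrier_mat b q" and "r \<le> b"
      and "\<And>l j. r \<le> l \<Longrightarrow> l < b \<Longrightarrow> j < q \<Longrightarrow> N $$ (l,j) = 0" and ij: "i < n" "j < q"
    for Y N b i j
  proof -
    have "(Y * N) $$ (i,j) = (\<Sum>l<b. Y $$ (i,l) * N $$ (l,j))"
      by (rule index_mult_mat_sum[OF Y N ij])
    also have "\<dots> = (\<Sum>l<r. take_cols r Y $$ (i,l) * N $$ (l,j))"
      using that by (intro sum.mono_neutral_cong_right) auto
    finally show ?thesis .
  qed
  show ?thesis
  proof (rule eq_matI)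
    fix i j assume "i < dim_row (X' * M')" "j < dim_col (X' * M')"
    then have ij: "i < n" "j < q" using X' M' by auto
    have "(X * M) $$ (i,j) = (\<Sum>l<r. take_cols r X $$ (i,l) * M $$ (l,j))"
      by (rule leading[OF X M r(1) tail ij])
    also have "\<dots> = (\<Sum>l<r. take_cols r X' $$ (i,l) * M' $$ (l,j))"
      unfolding cols using ij rows by (intro sum.cong) auto
    also have "\<dots> = (X' * M') $$ (i,j)" by (rule leading[OF X' M' r(2) tail' ij, symmetric])
    finally show "(X * M) $$ (i,j) = (X' * M') $$ (i,j)" .
  qed (use X X' M M' in auto)
qed

lemma index_mult_diagonal:
  assumes X: "X \<in> carrier_mat n a" and s: "s \<in> carrier_mat a b" and "diagonal_mat s"
    and ij: "i < n" "j < a" "j < b"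
  shows "(X * s) $$ (i,j) = X $$ (i,j) * s $$ (j,j)"
proof -
  have "(X * s) $$ (i,j) = (\<Sum>l<a. if l = j then X $$ (i,j) * s $$ (j,j) else 0)"
    unfolding index_mult_mat_sum[OF X s ij(1,3)]
    using assms unfolding diagonal_mat_def by (intro sum.cong) auto
  then show ?thesis using ij by simp
qed

lemma take_cols_eq_if_mult_diagonal_eq:
  fixes X Y s :: "'a :: idom mat"
  assumes X: "X \<in> carrier_mat n a" and Y: "Y \<in> carrier_mat n a"
    and s: "s \<in> carrier_mat a b" "diagonal_mat s" and r: "r \<le> a" "r \<le> b"
    and nonzero: "\<And>j. j < r \<Longrightarrow> s $$ (j,j) \<noteq> 0" and eq: "X * s = Y * s"
  shows "take_cols r X = take_cols r Y"
proof (rule eq_matI)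
  fix i j assume "i < dim_row (take_cols r Y)" "j < dim_col (take_cols r Y)"
  then have ij: "i < n" "j < r" using Y by auto
  have "X $$ (i,j) * s $$ (j,j) = Y $$ (i,j) * s $$ (j,j)"
    using arg_cong[OF eq, of "\<lambda>M. M $$ (i,j)"] ij r
    by (simp add: index_mult_diagonal[OF X s] index_mult_diagonal[OF Y s] del: index_mult_mat)
  then have "X $$ (i,j) = Y $$ (i,j)" using nonzero[OF ij(2)] by (metis mult_right_cancel)
  then show "take_cols r X $$ (i,j) = take_cols r Y $$ (i,j)" using X Y ij by simp
qed (use X Y in auto)

section \<open>Singular value decompositions\<close>

definition singular_value_mat :: "nat \<Rightarrow> nat \<Rightarrow> complex mat \<Rightarrow> bool" where
  "singular_value_mat m1 m2 s \<longleftrightarrow> s \<in> carrier_mat m1 m2 \<and> diagonal_mat s \<and>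
     (\<forall>i<min m1 m2. s $$ (i,i) \<in> \<real> \<and> 0 \<le> Re (s $$ (i,i))) \<and>
     (\<forall>i i'. i \<le> i' \<and> i' < min m1 m2 \<longrightarrow> Re (s $$ (i',i')) \<le> Re (s $$ (i,i)))"

definition is_svd ::
    "nat \<Rightarrow> nat \<Rightarrow> complex mat \<Rightarrow> complex mat \<Rightarrow> complex mat \<Rightarrow> complex mat \<Rightarrow> bool" where
  "is_svd m1 m2 A u s v \<longleftrightarrow>
     unitary_mat m1 u \<and> unitary_mat m2 v \<and> singular_value_mat m1 m2 s \<and> A = u * s * ctrans v"

lemma singular_value_mat_nonzero_prefix:
  assumes s: "singular_value_mat m1 m2 s"
  obtains r where "r \<le> min m1 m2" "\<And>j. j < r \<Longrightarrow> s $$ (j,j) \<noteq> 0"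
    "\<And>i j. r \<le> i \<Longrightarrow> i < m1 \<Longrightarrow> j < m2 \<Longrightarrow> s $$ (i,j) = 0"
proof -
  define r where "r = (LEAST j. j = min m1 m2 \<or> (j < min m1 m2 \<and> s $$ (j,j) = 0))"
  have r_le: "r \<le> min m1 m2" unfolding r_def by (rule Least_le) simp
  have r_zero: "r = min m1 m2 \<or> s $$ (r,r) = 0"
    unfolding r_def by (rule LeastI2[of _ "min m1 m2"]) auto
  have nonzero: "s $$ (j,j) \<noteq> 0" if "j < r" for j
    using not_less_Least[OF that[unfolded r_def]] r_le that by auto
  have "s $$ (j,j) = 0" if j: "r \<le> j" "j < min m1 m2" for j
  proof -
    have "Re (s $$ (j,j)) \<le> Re (s $$ (r,r))" "s $$ (j,j) \<in> \<real>" "0 \<le> Re (s $$ (j,j))"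
      using s j unfolding singular_value_mat_def by auto
    moreover have "s $$ (r,r) = 0" using r_zero j by auto
    ultimately show ?thesis by (simp add: complex_eq_iff complex_is_Real_iff)
  qed
  then have "s $$ (i,j) = 0" if "r \<le> i" "i < m1" "j < m2" for i j
    using s that unfolding singular_value_mat_def diagonal_mat_def by (cases "i = j") auto
  then show ?thesis using that r_le nonzero by blast
qed

lemma diagonal_mat_pad_rows:
  assumes s: "s \<in> carrier_mat n1 n2" and s': "s' \<in> carrier_mat k n2" and k: "k \<le> n1"
    and pad: "\<And>i j. i < n1 \<Longrightarrow> j < n2 \<Longrightarrow> s $$ (i,j) = (if i < k then s' $$ (i,j) else 0)"
  shows "diagonal_mat s \<longleftrightarrow> diagonal_mat s'"
proof
  have top: "s' $$ (i,j) = s $$ (i,j)" if "i < k" "j < n2" for i j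
    using pad[of i j] that k by simp
  assume "diagonal_mat s"
  then show "diagonal_mat s'" using s s' k top unfolding diagonal_mat_def by auto
next
  assume "diagonal_mat s'"
  then show "diagonal_mat s" using s s' pad unfolding diagonal_mat_def by auto
qed

lemma singular_value_mat_pad_rows:
  assumes s: "s \<in> carrier_mat n1 n2" and s': "s' \<in> carrier_mat k n2" and k: "k \<le> n1"
    and pad: "\<And>i j. i < n1 \<Longrightarrow> j < n2 \<Longrightarrow> s $$ (i,j) = (if i < k then s' $$ (i,j) else 0)"
  shows "singular_value_mat n1 n2 s \<longleftrightarrow> singular_value_mat k n2 s'"
proof -
  have top: "s' $$ (i,j) = s $$ (i,j)" if "i < k" "j < n2" for i j
    using pad[of i j] that k by simp
  have diag: "s $$ (i,i) = (if i < min k n2 then s' $$ (i,i) else 0)" if "i < min n1 n2" for i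
    using pad[of i i] that by simp
  have diagonal: "diagonal_mat s \<longleftrightarrow> diagonal_mat s'" by (rule diagonal_mat_pad_rows[OF assms])
  have diag_all: "(\<forall>i<min n1 n2. P (s $$ (i,i))) \<longleftrightarrow> (\<forall>i<min k n2. P (s' $$ (i,i)))"
    if "P 0" for P
  proof
    assume "\<forall>i<min n1 n2. P (s $$ (i,i))"
    then show "\<forall>i<min k n2. P (s' $$ (i,i))" using k top by auto
  next
    assume "\<forall>i<min k n2. P (s' $$ (i,i))"
    then show "\<forall>i<min n1 n2. P (s $$ (i,i))" using diag \<open>P 0\<close> by simp
  qed
  have sign: "(\<forall>i<min n1 n2. s $$ (i,i) \<in> \<real> \<and> 0 \<le> Re (s $$ (i,i))) \<longleftrightarrow>
      (\<forall>i<min k n2. s' $$ (i,i) \<in> \<real> \<and> 0 \<le> Re (s' $$ (i,i)))"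
    by (rule diag_all) simp
  have order: "(\<forall>i i'. i \<le> i' \<and> i' < min n1 n2 \<longrightarrow> Re (s $$ (i',i')) \<le> Re (s $$ (i,i))) \<longleftrightarrow>
      (\<forall>i i'. i \<le> i' \<and> i' < min k n2 \<longrightarrow> Re (s' $$ (i',i')) \<le> Re (s' $$ (i,i)))"
    if nonneg: "\<forall>i<min k n2. s' $$ (i,i) \<in> \<real> \<and> 0 \<le> Re (s' $$ (i,i))"
  proof
    assume "\<forall>i i'. i \<le> i' \<and> i' < min n1 n2 \<longrightarrow> Re (s $$ (i',i')) \<le> Re (s $$ (i,i))"
    then show "\<forall>i i'. i \<le> i' \<and> i' < min k n2 \<longrightarrow> Re (s' $$ (i',i')) \<le> Re (s' $$ (i,i))"
      using k top by auto
  next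
    assume ord: "\<forall>i i'. i \<le> i' \<and> i' < min k n2 \<longrightarrow> Re (s' $$ (i',i')) \<le> Re (s' $$ (i,i))"
    show "\<forall>i i'. i \<le> i' \<and> i' < min n1 n2 \<longrightarrow> Re (s $$ (i',i')) \<le> Re (s $$ (i,i))"
    proof (intro allI impI)
      fix i i' assume "i \<le> i' \<and> i' < min n1 n2"
      then show "Re (s $$ (i',i')) \<le> Re (s $$ (i,i))"
        using diag[of i] diag[of i'] ord nonneg by (cases "i' < min k n2") auto
    qed
  qed
  show ?thesis
    unfolding singular_value_mat_def
      by (intro conj_cong) (simp_all only: s s' diagonal sign order simp_thms)
qed

text \<open>Applying \<open>f i\<close> to the \<open>i\<close>-th singular value is the thresholding step of GTSVT.\<close>

definition diag_map :: "nat \<Rightarrow> nat \<Rightarrow> (nat \<Rightarrow> real \<Rightarrow> real) \<Rightarrow> complex mat \<Rightarrow> complex mat" where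
  "diag_map m1 m2 f s =
     mat m1 m2 (\<lambda>(i,j). if i = j then complex_of_real (f i (Re (s $$ (i,i)))) else 0)"

lemma diag_map_carrier_mat [simp]: "diag_map m1 m2 f s \<in> carrier_mat m1 m2"
  unfolding diag_map_def by simp

lemma index_diag_map_zero:
  "(\<And>r. f r 0 = 0) \<Longrightarrow> i < m1 \<Longrightarrow> j < m2 \<Longrightarrow> (i = j \<Longrightarrow> s $$ (i,i) = 0) \<Longrightarrow>
   diag_map m1 m2 f s $$ (i,j) = 0"
  unfolding diag_map_def by auto

text \<open>Only the columns of \<open>W\<close> that meet a nonzero singular value matter, so completing them to
  a unitary matrix yields a genuine SVD with the same right factor and the same thresholded product.\<close>

lemma is_svd_of_partial_isometry:
  assumes W: "W \<in> carrier_mat m a" and s: "singular_value_mat a q s" and v: "unitary_mat q v"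
    and ra: "r \<le> a" and zero: "\<And>i j. r \<le> i \<Longrightarrow> i < a \<Longrightarrow> j < q \<Longrightarrow> s $$ (i,j) = 0"
    and WW: "ctrans (take_cols r W) * take_cols r W = 1\<^sub>m r"
    and f0: "\<And>i. f i 0 = 0"
  obtains u t where "is_svd m q (W * s * ctrans v) u t v"
    "u * diag_map m q f t = W * diag_map a q f s"
proof -
  have Wr: "take_cols r W \<in> carrier_mat m r" using W take_cols_carrier_mat[of r W] by simp
  have rm: "r \<le> m" by (rule isometry_dim_le[OF Wr WW])
  obtain u where u: "unitary_mat m u" and u_cols: "take_cols r u = take_cols r W"
    using isometry_extends_to_unitary[OF Wr WW] by metis
  have uc: "u \<in> carrier_mat m m" using u unfolding unitary_mat_def by blast
  have sc: "s \<in> carrier_mat a q" using s unfolding singular_value_mat_def by blast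
  define t where "t = mat m q (\<lambda>(i,j). if i < r then s $$ (i,j) else 0)"
  have tc: "t \<in> carrier_mat m q" unfolding t_def by simp
  have "singular_value_mat m q t"
  proof (cases "a \<le> m")
    case True
    have "t $$ (i,j) = (if i < a then s $$ (i,j) else 0)" if "i < m" "j < q" for i j
      using that zero ra by (auto simp: t_def)
    then show ?thesis using singular_value_mat_pad_rows[OF tc sc True] s by blast
  next
    case False
    have "s $$ (i,j) = (if i < m then t $$ (i,j) else 0)" if "i < a" "j < q" for i j
      using that zero rm by (auto simp: t_def)
    then show ?thesis using singular_value_mat_pad_rows[OF sc tc] False s by simp
  qed
  have "u * t = W * s"
    by (rule mult_eq_by_leading_part[OF uc W tc sc rm ra u_cols])
      (use rm in \<open>auto simp: t_def zero\<close>)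
  moreover have "u * diag_map m q f t = W * diag_map a q f s"
    by (rule mult_eq_by_leading_part[OF uc W _ _ rm ra u_cols])
      (use rm ra in \<open>auto simp: diag_map_def t_def zero f0\<close>)
  ultimately show ?thesis
    using that u v \<open>singular_value_mat m q t\<close> unfolding is_svd_def by metis
qed

lemma is_svd_isometry_mult_if_is_svd:
  assumes Q: "Q \<in> carrier_mat n1 k" and QQ: "ctrans Q * Q = 1\<^sub>m k"
    and svd: "is_svd k n2 B u' s' v" and f0: "\<And>i. f i 0 = 0"
  obtains u s where "is_svd n1 n2 (Q * B) u s v"
    "u * diag_map n1 n2 f s * ctrans v = Q * (u' * diag_map k n2 f s' * ctrans v)"
proof -
  from svd have u': "unitary_mat k u'" and v: "unitary_mat n2 v"
    and s': "singular_value_mat k n2 s'" and B: "B = u' * s' * ctrans v"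
    unfolding is_svd_def by auto
  have u'c: "u' \<in> carrier_mat k k" and u'u': "ctrans u' * u' = 1\<^sub>m k"
    using u' unfolding unitary_mat_def by auto
  have s'c: "s' \<in> carrier_mat k n2" using s' unfolding singular_value_mat_def by blast
  have vc: "ctrans v \<in> carrier_mat n2 n2" using v unfolding unitary_mat_def by auto
  obtain r where r: "r \<le> min k n2" and zero: "\<And>i j. r \<le> i \<Longrightarrow> i < k \<Longrightarrow> j < n2 \<Longrightarrow> s' $$ (i,j) = 0"
    using singular_value_mat_nonzero_prefix[OF s'] by metis
  have u'r: "take_cols r u' \<in> carrier_mat k r" using u'c take_cols_carrier_mat[of r u'] by simp
  have rk: "r \<le> k" using r by simp
  have "ctrans (take_cols r (Q * u')) * take_cols r (Q * u') = 1\<^sub>m r"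
    using isometry_take_cols[OF u'c u'u' rk]
    by (simp add: take_cols_mult[OF Q u'c rk] isometry_mult[OF Q QQ u'r])
  then obtain u s where svd_QB: "is_svd n1 n2 (Q * u' * s' * ctrans v) u s v"
    and uG: "u * diag_map n1 n2 f s = Q * u' * diag_map k n2 f s'"
    using is_svd_of_partial_isometry[where f = f, OF mult_carrier_mat[OF Q u'c] s' v rk zero _ f0]
    by blast
  have "Q * B = Q * u' * s' * ctrans v" unfolding B by (rule assoc_mult_mat3[OF Q u'c s'c vc])
  moreover have "u * diag_map n1 n2 f s * ctrans v = Q * (u' * diag_map k n2 f s' * ctrans v)"
    unfolding uG by (rule assoc_mult_mat3[OF Q u'c diag_map_carrier_mat vc, symmetric])
  ultimately show ?thesis using that svd_QB by metis
qed

text \<open>\<open>Q (Q\<^sup>H u)\<close> is the projection of \<open>u\<close> onto the range of \<open>Q\<close>, which contains every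
  column of \<open>u\<close> that meets a nonzero singular value.\<close>

lemma is_svd_isometry_mult_cols_in_range:
  assumes Q: "Q \<in> carrier_mat n1 k" and QQ: "ctrans Q * Q = 1\<^sub>m k" and B: "B \<in> carrier_mat k n2"
    and svd: "is_svd n1 n2 (Q * B) u s v"
    and r: "r \<le> min n1 n2" and nonzero: "\<And>j. j < r \<Longrightarrow> s $$ (j,j) \<noteq> 0"
  shows "take_cols r (Q * (ctrans Q * u)) = take_cols r u"
proof -
  from svd have uc: "u \<in> carrier_mat n1 n1" and vc: "v \<in> carrier_mat n2 n2"
    and vv: "ctrans v * v = 1\<^sub>m n2"
    and sc: "s \<in> carrier_mat n1 n2" and sd: "diagonal_mat s" and QB: "Q * B = u * s * ctrans v"
    unfolding is_svd_def unitary_mat_def singular_value_mat_def by auto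
  have QHc: "ctrans Q \<in> carrier_mat k n1" using Q by simp
  have "u * s = Q * B * v" using uc sc vc by (simp add: QB assoc_mult_mat[of _ n1 n2 _ n2 _ n2] vv)
  then have us: "u * s = Q * (B * v)" using Q B vc
    by (simp add: assoc_mult_mat[of Q n1 k B n2 v n2])
  have Bv: "B * v \<in> carrier_mat k n2" using B vc by simp
  have "Q * (ctrans Q * u) * s = Q * (ctrans Q * (u * s))"
    using assoc_mult_mat[OF Q mult_carrier_mat[OF QHc uc] sc] assoc_mult_mat[OF QHc uc sc] by simp
  also have "\<dots> = Q * (ctrans Q * Q * (B * v))"
    unfolding us assoc_mult_mat[OF QHc Q Bv] ..
  also have "\<dots> = u * s" using QQ by (simp add: left_mult_one_mat[OF Bv] us)
  finally show ?thesis
    using r by (intro take_cols_eq_if_mult_diagonal_eq[OF _ uc sc sd _ _ nonzero])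
      (use Q QHc uc in auto)
qed

lemma is_svd_if_is_svd_isometry_mult:
  assumes Q: "Q \<in> carrier_mat n1 k" and QQ: "ctrans Q * Q = 1\<^sub>m k" and B: "B \<in> carrier_mat k n2"
    and svd: "is_svd n1 n2 (Q * B) u s v" and f0: "\<And>i. f i 0 = 0"
  obtains u' s' where "is_svd k n2 B u' s' v"
    "Q * (u' * diag_map k n2 f s' * ctrans v) = u * diag_map n1 n2 f s * ctrans v"
proof -
  from svd have u: "unitary_mat n1 u" and v: "unitary_mat n2 v"
    and s: "singular_value_mat n1 n2 s" and QB: "Q * B = u * s * ctrans v"
    unfolding is_svd_def by auto
  have uc: "u \<in> carrier_mat n1 n1" and uu: "ctrans u * u = 1\<^sub>m n1" and vc: "v \<in> carrier_mat n2 n2"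
    using u v unfolding unitary_mat_def by auto
  have sc: "s \<in> carrier_mat n1 n2" using s unfolding singular_value_mat_def by auto
  obtain r where r: "r \<le> min n1 n2" and nonzero: "\<And>j. j < r \<Longrightarrow> s $$ (j,j) \<noteq> 0"
    and zero: "\<And>i j. r \<le> i \<Longrightarrow> i < n1 \<Longrightarrow> j < n2 \<Longrightarrow> s $$ (i,j) = 0"
    using singular_value_mat_nonzero_prefix[OF s] by metis
  define W where "W = ctrans Q * u"
  have Wc: "W \<in> carrier_mat k n1" unfolding W_def using ctrans_carrier_mat[OF Q] uc by simp
  have cols: "take_cols r (Q * W) = take_cols r u"
    unfolding W_def by (rule is_svd_isometry_mult_cols_in_range[OF Q QQ B svd r nonzero])
  have Wr: "take_cols r W \<in> carrier_mat k r" using Wc take_cols_carrier_mat[of r W] by simp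
  have "ctrans (take_cols r W) * take_cols r W = ctrans (Q * take_cols r W) * (Q * take_cols r W)"
    by (rule isometry_mult[OF Q QQ Wr, symmetric])
  also have "\<dots> = ctrans (take_cols r u) * take_cols r u"
    using r cols by (simp add: take_cols_mult[OF Q Wc])
  also have "\<dots> = 1\<^sub>m r" using r by (intro isometry_take_cols[OF uc uu]) simp
  finally obtain u' s' where svd_B: "is_svd k n2 (W * s * ctrans v) u' s' v"
    and u'G: "u' * diag_map k n2 f s' = W * diag_map n1 n2 f s"
    using is_svd_of_partial_isometry[where f = f, OF Wc s v _ zero _ f0] r by auto
  have "W * s * ctrans v = ctrans Q * (Q * B)"
    unfolding W_def QB
    by (rule assoc_mult_mat3[OF ctrans_carrier_mat[OF Q] uc sc ctrans_carrier_mat[OF vc],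
          symmetric])
  also have "\<dots> = B" using Q B QQ by (simp add: assoc_mult_mat[of _ k n1 Q k B n2, symmetric])
  finally have "W * s * ctrans v = B" .
  moreover have "Q * W * diag_map n1 n2 f s = u * diag_map n1 n2 f s"
    by (rule mult_eq_by_leading_part[OF mult_carrier_mat[OF Q Wc] uc _ _ _ _ cols])
      (use r zero in \<open>auto intro!: index_diag_map_zero f0\<close>)
  moreover have "Q * (u' * diag_map k n2 f s' * ctrans v) = Q * W * diag_map n1 n2 f s * ctrans v"
    unfolding u'G by (rule assoc_mult_mat3[OF Q Wc diag_map_carrier_mat ctrans_carrier_mat[OF vc]])
  ultimately show ?thesis using that svd_B by metis
qed

section \<open>Tensors under the transform\<close>

abbreviation tensor_of_slices :: "nat list \<Rightarrow> (nat list \<Rightarrow> complex mat) \<Rightarrow> tensor" where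
  "tensor_of_slices ns F \<equiv> \<lambda>idx. if valid_idx ns idx then F idx else 0\<^sub>m 0 0"

lemma valid_idx_update: "valid_idx ns idx \<Longrightarrow> a < length ns \<Longrightarrow> l < ns ! a \<Longrightarrow> valid_idx ns (idx[a := l])"
  by (auto simp: valid_idx_def nth_list_update)

lemma is_tensor_carrier_mat: "is_tensor m1 m2 ns A \<Longrightarrow> valid_idx ns idx \<Longrightarrow> A idx \<in> carrier_mat m1 m2"
  unfolding is_tensor_def by metis

lemma is_tensor_junk: "is_tensor m1 m2 ns A \<Longrightarrow> \<not> valid_idx ns idx \<Longrightarrow> A idx = 0\<^sub>m 0 0"
  unfolding is_tensor_def by metis

lemma is_tensor_of_slices:
  "(\<And>idx. valid_idx ns idx \<Longrightarrow> F idx \<in> carrier_mat m1 m2) \<Longrightarrow>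
    is_tensor m1 m2 ns (tensor_of_slices ns F)"
  unfolding is_tensor_def by auto

lemma mode_prod_tensor: "is_tensor m1 m2 ns A \<Longrightarrow> is_tensor m1 m2 ns (mode_prod ns a M A)"
  unfolding mode_prod_def by (rule is_tensor_of_slices) (auto dest: is_tensor_carrier_mat)

lemma index_mode_prod:
  "is_tensor m1 m2 ns A \<Longrightarrow> valid_idx ns idx \<Longrightarrow> r < m1 \<Longrightarrow> c < m2 \<Longrightarrow>
   mode_prod ns a M A idx $$ (r,c) = (\<Sum>l<ns ! a. M $$ (idx ! a, l) * A (idx[a := l]) $$ (r,c))"
  unfolding mode_prod_def by (auto dest: is_tensor_carrier_mat)

lemma tensor_eqI:
  assumes A: "is_tensor m1 m2 ns A" and B: "is_tensor m1 m2 ns B"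
    and eq: "\<And>idx r c. valid_idx ns idx \<Longrightarrow> r < m1 \<Longrightarrow> c < m2 \<Longrightarrow> A idx $$ (r,c) = B idx $$ (r,c)"
  shows "A = B"
proof
  fix idx
  show "A idx = B idx"
  proof (cases "valid_idx ns idx")
    case True
    then show ?thesis
      using is_tensor_carrier_mat[OF A True] is_tensor_carrier_mat[OF B True] eq[OF True]
      by (intro eq_matI) auto
  qed (simp add: is_tensor_junk[OF A] is_tensor_junk[OF B])
qed

lemma mode_prod_one:
  assumes A: "is_tensor m1 m2 ns A" and a: "a < length ns"
  shows "mode_prod ns a (1\<^sub>m (ns ! a)) A = A"
proof (rule tensor_eqI[OF mode_prod_tensor[OF A] A])
  fix idx r c assume idx: "valid_idx ns idx" and rc: "r < m1" "c < m2"
  have ia: "idx ! a < ns ! a" using idx a by (simp add: valid_idx_def)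
  have "mode_prod ns a (1\<^sub>m (ns ! a)) A idx $$ (r,c)
     = (\<Sum>l<ns ! a. if idx ! a = l then A (idx[a := l]) $$ (r,c) else 0)"
    unfolding index_mode_prod[OF A idx rc] using ia by (intro sum.cong) auto
  then show "mode_prod ns a (1\<^sub>m (ns ! a)) A idx $$ (r,c) = A idx $$ (r,c)"
    using ia by simp
qed

lemma mode_prod_mult:
  assumes A: "is_tensor m1 m2 ns A" and a: "a < length ns"
    and M: "M \<in> carrier_mat (ns ! a) (ns ! a)" and N: "N \<in> carrier_mat (ns ! a) (ns ! a)"
  shows "mode_prod ns a M (mode_prod ns a N A) = mode_prod ns a (M * N) A"
proof (rule tensor_eqI[OF mode_prod_tensor[OF mode_prod_tensor[OF A]] mode_prod_tensor[OF A]])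
  fix idx r c assume idx: "valid_idx ns idx" and rc: "r < m1" "c < m2"
  have ia: "idx ! a < ns ! a" and len: "length idx = length ns"
    using idx a by (simp_all add: valid_idx_def)
  have "mode_prod ns a M (mode_prod ns a N A) idx $$ (r,c)
     = (\<Sum>l<ns ! a. \<Sum>m<ns ! a. M $$ (idx ! a, l) * N $$ (l, m) * A (idx[a := m]) $$ (r,c))"
    unfolding index_mode_prod[OF mode_prod_tensor[OF A] idx rc]
    using idx a len by (intro sum.cong refl)
      (simp add: index_mode_prod[OF A valid_idx_update[OF idx a] rc] sum_distrib_left mult.assoc)
  also have "\<dots> = (\<Sum>m<ns ! a. (M * N) $$ (idx ! a, m) * A (idx[a := m]) $$ (r,c))"
    using M N ia by (subst sum.swap, intro sum.cong refl)
      (simp add: index_mult_mat_sum[OF M N] sum_distrib_right del: index_mult_mat)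
  also have "\<dots> = mode_prod ns a (M * N) A idx $$ (r,c)"
    unfolding index_mode_prod[OF A idx rc] ..
  finally show "mode_prod ns a M (mode_prod ns a N A) idx $$ (r,c) =
    mode_prod ns a (M * N) A idx $$ (r,c)" .
qed

lemma foldl_mode_prod_tensor:
  "is_tensor m1 m2 ns A \<Longrightarrow> is_tensor m1 m2 ns (foldl (\<lambda>T a. mode_prod ns a (M a) T) A xs)"
  by (induction xs arbitrary: A) (auto intro: mode_prod_tensor)

lemma transf_tensor: "is_tensor m1 m2 ns A \<Longrightarrow> is_tensor m1 m2 ns (transf ns Us A)"
  unfolding transf_def by (rule foldl_mode_prod_tensor)

lemma transf_inv_tensor: "is_tensor m1 m2 ns A \<Longrightarrow> is_tensor m1 m2 ns (transf_inv ns Us A)"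
  unfolding transf_inv_def by (rule foldl_mode_prod_tensor)

lemma transf_carrier_mat:
  "is_tensor m1 m2 ns A \<Longrightarrow> valid_idx ns idx \<Longrightarrow> transf ns Us A idx \<in> carrier_mat m1 m2"
  by (rule is_tensor_carrier_mat[OF transf_tensor])

lemma foldl_mode_prod_cancel:
  assumes A: "is_tensor m1 m2 ns A"
    and MN: "\<And>a. a \<in> set xs \<Longrightarrow> a < length ns \<and> M a \<in> carrier_mat (ns ! a) (ns ! a) \<and>
               N a \<in> carrier_mat (ns ! a) (ns ! a) \<and> N a * M a = 1\<^sub>m (ns ! a)"
  shows "foldl (\<lambda>T a. mode_prod ns a (N a) T)
    (foldl (\<lambda>T a. mode_prod ns a (M a) T) A xs) (rev xs) = A"
  using MN
proof (induction xs rule: rev_induct)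
  case (snoc x xs)
  define T where "T = foldl (\<lambda>T a. mode_prod ns a (M a) T) A xs"
  have T: "is_tensor m1 m2 ns T" unfolding T_def by (rule foldl_mode_prod_tensor[OF A])
  have "mode_prod ns x (N x) (mode_prod ns x (M x) T) = T"
    using snoc.prems[of x] by (simp add: mode_prod_mult[OF T] mode_prod_one[OF T])
  then show ?case using snoc by (simp add: T_def[symmetric])
qed simp

definition invertible_transforms :: "nat list \<Rightarrow> complex mat list \<Rightarrow> bool" where
  "invertible_transforms ns Us \<longleftrightarrow> (\<forall>a<length ns.
     Us ! a \<in> carrier_mat (ns ! a) (ns ! a) \<and> inv_mat (Us ! a) \<in> carrier_mat (ns ! a) (ns ! a) \<and>
     Us ! a * inv_mat (Us ! a) = 1\<^sub>m (ns ! a) \<and> inv_mat (Us ! a) * Us ! a = 1\<^sub>m (ns ! a))"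

lemma inv_mat_eqI:
  assumes U: "U \<in> carrier_mat n n" and M: "M \<in> carrier_mat n n"
    and UM: "U * M = 1\<^sub>m n" and MU: "M * U = 1\<^sub>m n"
  shows "inv_mat U = M"
  unfolding inv_mat_def
proof (rule the_equality)
  show "M \<in> carrier_mat (dim_row U) (dim_row U) \<and> U * M = 1\<^sub>m (dim_row U) \<and> M * U = 1\<^sub>m (dim_row U)"
    using U M UM MU by simp
  fix M' assume "M' \<in> carrier_mat (dim_row U) (dim_row U) \<and> U * M' = 1\<^sub>m (dim_row U) \<and>
    M' * U = 1\<^sub>m (dim_row U)"
  then have M': "M' \<in> carrier_mat n n" and UM': "U * M' = 1\<^sub>m n" using U by auto
  have "M' = M * U * M'" using M' MU by simp
  also have "\<dots> = M" using U M M' UM' by (simp add: assoc_mult_mat[of M n n U n M' n])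
  finally show "M' = M" .
qed

lemma invertible_transforms_if_scaled_unitary:
  assumes "\<forall>a<length ns. Us ! a \<in> carrier_mat (ns ! a) (ns ! a) \<and>
             (\<exists>\<alpha>>0. Us ! a * ctrans (Us ! a) = \<alpha> \<cdot>\<^sub>m 1\<^sub>m (ns ! a) \<and>
                     ctrans (Us ! a) * Us ! a = \<alpha> \<cdot>\<^sub>m 1\<^sub>m (ns ! a))"
  shows "invertible_transforms ns Us"
  unfolding invertible_transforms_def
proof (intro allI impI)
  fix a assume "a < length ns"
  then obtain \<alpha> :: complex where U: "Us ! a \<in> carrier_mat (ns ! a) (ns ! a)" and "\<alpha> > 0"
    and UU: "Us ! a * ctrans (Us ! a) = \<alpha> \<cdot>\<^sub>m 1\<^sub>m (ns ! a)"
      "ctrans (Us ! a) * Us ! a = \<alpha> \<cdot>\<^sub>m 1\<^sub>m (ns ! a)"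
    using assms by blast
  then have "\<alpha> \<noteq> 0" by auto
  define M where "M = (1 / \<alpha>) \<cdot>\<^sub>m ctrans (Us ! a)"
  have M: "M \<in> carrier_mat (ns ! a) (ns ! a)" unfolding M_def using U by simp
  have UM: "Us ! a * M = 1\<^sub>m (ns ! a)"
    unfolding M_def mult_smult_distrib[OF U ctrans_carrier_mat[OF U]] UU(1)
    using \<open>\<alpha> \<noteq> 0\<close> by (intro eq_matI) auto
  have MU: "M * Us ! a = 1\<^sub>m (ns ! a)"
    unfolding M_def mult_smult_assoc_mat[OF ctrans_carrier_mat[OF U] U] UU(2)
    using \<open>\<alpha> \<noteq> 0\<close> by (intro eq_matI) auto
  show "Us ! a \<in> carrier_mat (ns ! a) (ns ! a) \<and> inv_mat (Us ! a) \<in> carrier_mat (ns ! a) (ns ! a) \<and>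
     Us ! a * inv_mat (Us ! a) = 1\<^sub>m (ns ! a) \<and> inv_mat (Us ! a) * Us ! a = 1\<^sub>m (ns ! a)"
    using U M UM MU inv_mat_eqI[OF U M UM MU] by simp
qed

lemma transf_inv_transf:
  "invertible_transforms ns Us \<Longrightarrow> is_tensor m1 m2 ns A \<Longrightarrow> transf_inv ns Us (transf ns Us A) = A"
  unfolding transf_def transf_inv_def invertible_transforms_def
  by (rule foldl_mode_prod_cancel) auto

lemma transf_transf_inv:
  "invertible_transforms ns Us \<Longrightarrow> is_tensor m1 m2 ns A \<Longrightarrow> transf ns Us (transf_inv ns Us A) = A"
  unfolding transf_def transf_inv_def invertible_transforms_def
  using foldl_mode_prod_cancel[where xs = "rev [0..<length ns]" and M = "\<lambda>a. inv_mat (Us ! a)"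
      and N = "\<lambda>a. Us ! a"]
  by simp

lemma tensor_eq_if_transf_eq:
  assumes G: "invertible_transforms ns Us" and X: "is_tensor m1 m2 ns X"
    and Y: "is_tensor m1' m2' ns Y"
    and eq: "\<And>idx. valid_idx ns idx \<Longrightarrow> transf ns Us X idx = transf ns Us Y idx"
  shows "X = Y"
proof -
  have "transf ns Us X = transf ns Us Y"
  proof
    fix idx
    show "transf ns Us X idx = transf ns Us Y idx"
      using eq is_tensor_junk[OF transf_tensor[OF X]] is_tensor_junk[OF transf_tensor[OF Y]]
      by (cases "valid_idx ns idx") auto
  qed
  then show ?thesis using transf_inv_transf[OF G X] transf_inv_transf[OF G Y] by metis
qed

lemma
  assumes G: "invertible_transforms ns Us"
    and F: "\<And>idx. valid_idx ns idx \<Longrightarrow> F idx \<in> carrier_mat m1 m2"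
  shows transf_inv_of_slices_tensor: "is_tensor m1 m2 ns (transf_inv ns Us (tensor_of_slices ns F))"
    and transf_transf_inv_of_slices:
      "valid_idx ns idx \<Longrightarrow> transf ns Us (transf_inv ns Us (tensor_of_slices ns F)) idx = F idx"
proof -
  have T: "is_tensor m1 m2 ns (tensor_of_slices ns F)" by (rule is_tensor_of_slices[OF F])
  show "is_tensor m1 m2 ns (transf_inv ns Us (tensor_of_slices ns F))"
    by (rule transf_inv_tensor[OF T])
  show "valid_idx ns idx \<Longrightarrow> transf ns Us (transf_inv ns Us (tensor_of_slices ns F)) idx = F idx"
    by (simp add: transf_transf_inv[OF G T])
qed

lemma
  assumes G: "invertible_transforms ns Us" and A: "is_tensor m1 k ns A" and B: "is_tensor k m2 ns B"
  shows tprod_tensor: "is_tensor m1 m2 ns (tprod ns Us A B)"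
    and transf_tprod: "valid_idx ns idx \<Longrightarrow>
      transf ns Us (tprod ns Us A B) idx = transf ns Us A idx * transf ns Us B idx"
proof -
  have F: "transf ns Us A idx * transf ns Us B idx \<in> carrier_mat m1 m2"
    if "valid_idx ns idx" for idx
    using transf_carrier_mat[where Us = Us, OF A that]
      transf_carrier_mat[where Us = Us, OF B that]
    by simp
  show "is_tensor m1 m2 ns (tprod ns Us A B)"
    unfolding tprod_def by (rule transf_inv_of_slices_tensor[OF G F])
  show "valid_idx ns idx \<Longrightarrow>
    transf ns Us (tprod ns Us A B) idx = transf ns Us A idx * transf ns Us B idx"
    unfolding tprod_def by (rule transf_transf_inv_of_slices[OF G F])
qed

lemma
  assumes G: "invertible_transforms ns Us" and A: "is_tensor m1 m2 ns A"
  shows ttrans_tensor: "is_tensor m2 m1 ns (ttrans ns Us A)"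
    and transf_ttrans: "valid_idx ns idx \<Longrightarrow>
      transf ns Us (ttrans ns Us A) idx = ctrans (transf ns Us A idx)"
proof -
  have F: "ctrans (transf ns Us A idx) \<in> carrier_mat m2 m1" if "valid_idx ns idx" for idx
    using transf_carrier_mat[where Us = Us, OF A that] by simp
  show "is_tensor m2 m1 ns (ttrans ns Us A)"
    unfolding ttrans_def by (rule transf_inv_of_slices_tensor[OF G F])
  show "valid_idx ns idx \<Longrightarrow> transf ns Us (ttrans ns Us A) idx = ctrans (transf ns Us A idx)"
    unfolding ttrans_def by (rule transf_transf_inv_of_slices[OF G F])
qed

lemma
  assumes G: "invertible_transforms ns Us"
  shows tident_tensor: "is_tensor m m ns (tident ns Us m)"
    and transf_tident: "valid_idx ns idx \<Longrightarrow> transf ns Us (tident ns Us m) idx = 1\<^sub>m m"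
proof -
  have F: "1\<^sub>m m \<in> carrier_mat m m" if "valid_idx ns idx" for idx :: "nat list" by simp
  show "is_tensor m m ns (tident ns Us m)"
    unfolding tident_def by (rule transf_inv_of_slices_tensor[OF G F])
  show "valid_idx ns idx \<Longrightarrow> transf ns Us (tident ns Us m) idx = 1\<^sub>m m"
    unfolding tident_def by (rule transf_transf_inv_of_slices[OF G F])
qed

section \<open>The T-SVD and generalized thresholding\<close>

lemma mode_prod_f_diagonal:
  assumes A: "is_tensor m1 m2 ns A" and D: "f_diagonal ns A"
  shows "f_diagonal ns (mode_prod ns a M A)"
  unfolding f_diagonal_def diagonal_mat_def
proof (intro allI impI)
  fix idx i j assume idx: "valid_idx ns idx"
    and ij: "i < dim_row (mode_prod ns a M A idx)" "j < dim_col (mode_prod ns a M A idx)" "i \<noteq> j"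
  then have ij': "i < m1" "j < m2"
    using is_tensor_carrier_mat[OF mode_prod_tensor[where a = a and M = M, OF A] idx] by auto
  have "A (idx[a := l]) $$ (i,j) = 0" if "l < ns ! a" for l
  proof -
    have "valid_idx ns (idx[a := l])"
      using idx that valid_idx_update[OF idx] by (cases "a < length ns") (auto simp: valid_idx_def)
    then show ?thesis
      using D ij' ij(3) is_tensor_carrier_mat[OF A]
        unfolding f_diagonal_def diagonal_mat_def by fastforce
  qed
  then show "mode_prod ns a M A idx $$ (i,j) = 0"
    unfolding index_mode_prod[OF A idx ij'] by (intro sum.neutral) simp
qed

lemma foldl_mode_prod_f_diagonal:
  "is_tensor m1 m2 ns A \<Longrightarrow> f_diagonal ns A \<Longrightarrow>
   f_diagonal ns (foldl (\<lambda>T a. mode_prod ns a (M a) T) A xs)"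
  by (induction xs arbitrary: A) (auto intro: mode_prod_f_diagonal mode_prod_tensor)

lemma transf_inv_f_diagonal:
  "is_tensor m1 m2 ns A \<Longrightarrow> f_diagonal ns A \<Longrightarrow> f_diagonal ns (transf_inv ns Us A)"
  unfolding transf_inv_def by (rule foldl_mode_prod_f_diagonal)

lemma torth_if_unitary_slices:
  assumes G: "invertible_transforms ns Us" and W: "is_tensor m m ns W"
    and unitary: "\<And>idx. valid_idx ns idx \<Longrightarrow> unitary_mat m (transf ns Us W idx)"
  shows "torth ns Us m W"
  unfolding torth_def
proof
  note WH = ttrans_tensor[OF G W]
  show "tprod ns Us (ttrans ns Us W) W = tident ns Us m"
    by (rule tensor_eq_if_transf_eq[OF G tprod_tensor[OF G WH W] tident_tensor[OF G]])
      (use unitary in \<open>simp add: transf_tprod[OF G WH W] transf_ttrans[OF G W] transf_tident[OF G]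
        unitary_mat_def\<close>)
  show "tprod ns Us W (ttrans ns Us W) = tident ns Us m"
    by (rule tensor_eq_if_transf_eq[OF G tprod_tensor[OF G W WH] tident_tensor[OF G]])
      (use unitary in \<open>simp add: transf_tprod[OF G W WH] transf_ttrans[OF G W] transf_tident[OF G]
        unitary_mat_def\<close>)
qed

lemma part_orth_slices:
  assumes G: "invertible_transforms ns Us" and Q: "is_tensor n k ns Q" and "part_orth ns Us k Q"
    and idx: "valid_idx ns idx"
  shows "ctrans (transf ns Us Q idx) * transf ns Us Q idx = 1\<^sub>m k"
proof -
  have "transf ns Us (tprod ns Us (ttrans ns Us Q) Q) idx = transf ns Us (tident ns Us k) idx"
    using \<open>part_orth ns Us k Q\<close> unfolding part_orth_def by simp
  then show ?thesis
    by (simp add: transf_tprod[OF G ttrans_tensor[OF G Q] Q idx] transf_ttrans[OF G Q idx]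
        transf_tident[OF G idx])
qed

lemma is_tsvd_iff_slices:
  assumes G: "invertible_transforms ns Us" and A: "is_tensor m1 m2 ns A"
  shows "is_tsvd ns Us m1 m2 A U S V \<longleftrightarrow>
    is_tensor m1 m1 ns U \<and> is_tensor m1 m2 ns S \<and> is_tensor m2 m2 ns V \<and>
    (\<forall>idx. valid_idx ns idx \<longrightarrow>
       is_svd m1 m2 (transf ns Us A idx)
         (transf ns Us U idx) (transf ns Us S idx) (transf ns Us V idx))"
    (is "_ \<longleftrightarrow> ?U \<and> ?S \<and> ?V \<and> (\<forall>idx. ?svd idx)")
proof
  assume T: "is_tsvd ns Us m1 m2 A U S V"
  then have S: "is_tensor m1 m2 ns S" by (simp add: is_tsvd_def)
  have "?svd idx" for idx
    using T transf_carrier_mat[where Us = Us and idx = idx, OF S]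
    unfolding is_tsvd_def is_svd_def singular_value_mat_def by blast
  then show "?U \<and> ?S \<and> ?V \<and> (\<forall>idx. ?svd idx)" using T by (simp add: is_tsvd_def)
next
  assume "?U \<and> ?S \<and> ?V \<and> (\<forall>idx. ?svd idx)"
  then have U: "is_tensor m1 m1 ns U" and S: "is_tensor m1 m2 ns S" and V: "is_tensor m2 m2 ns V"
    and svd: "\<And>idx. ?svd idx" by blast+
  have "torth ns Us m1 U" "torth ns Us m2 V"
    using svd by (auto intro!: torth_if_unitary_slices[OF G U] torth_if_unitary_slices[OF G V]
        simp: is_svd_def)
  moreover have "f_diagonal ns S"
  proof -
    have "f_diagonal ns (transf ns Us S)"
      using svd by (simp add: f_diagonal_def is_svd_def singular_value_mat_def)
    then show ?thesis
      using transf_inv_f_diagonal[OF transf_tensor[OF S]] transf_inv_transf[OF G S] by metis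
  qed
  moreover have "A = tprod ns Us (tprod ns Us U S) (ttrans ns Us V)"
  proof (rule tensor_eq_if_transf_eq[OF G A
        tprod_tensor[OF G tprod_tensor[OF G U S] ttrans_tensor[OF G V]]])
    fix idx assume "valid_idx ns idx"
    then show "transf ns Us A idx =
      transf ns Us (tprod ns Us (tprod ns Us U S) (ttrans ns Us V)) idx"
      using svd[of idx] unfolding is_svd_def
      by (simp add: transf_tprod[OF G tprod_tensor[OF G U S] ttrans_tensor[OF G V]]
        transf_tprod[OF G U S]
          transf_ttrans[OF G V])
  qed
  ultimately show "is_tsvd ns Us m1 m2 A U S V"
    using U S V svd unfolding is_tsvd_def is_svd_def singular_value_mat_def by simp
qed

lemma exists_tsvd_of_slices:
  assumes G: "invertible_transforms ns Us" and A: "is_tensor m1 m2 ns A"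
    and V: "is_tensor m2 m2 ns V"
    and ex: "\<And>idx. valid_idx ns idx \<Longrightarrow>
      \<exists>u s. is_svd m1 m2 (transf ns Us A idx) u s (transf ns Us V idx) \<and> P idx u s"
  obtains U S where "is_tsvd ns Us m1 m2 A U S V"
    "\<And>idx. valid_idx ns idx \<Longrightarrow> P idx (transf ns Us U idx) (transf ns Us S idx)"
proof -
  obtain u s where us: "\<And>idx. valid_idx ns idx \<Longrightarrow>
      is_svd m1 m2 (transf ns Us A idx) (u idx) (s idx) (transf ns Us V idx) \<and>
      P idx (u idx) (s idx)"
    using ex by metis
  have uc: "u idx \<in> carrier_mat m1 m1" and sc: "s idx \<in> carrier_mat m1 m2"
    if "valid_idx ns idx" for idx
    using us[OF that] unfolding is_svd_def unitary_mat_def singular_value_mat_def by blast+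
  define U where "U = transf_inv ns Us (tensor_of_slices ns u)"
  define S where "S = transf_inv ns Us (tensor_of_slices ns s)"
  have "is_tensor m1 m1 ns U" "is_tensor m1 m2 ns S"
    unfolding U_def S_def using transf_inv_of_slices_tensor[OF G] uc sc by blast+
  moreover have "transf ns Us U idx = u idx" "transf ns Us S idx = s idx"
    if "valid_idx ns idx" for idx
    unfolding U_def S_def using transf_transf_inv_of_slices[OF G] uc sc that by blast+
  ultimately show ?thesis
    using that[of U S] us V by (simp add: is_tsvd_iff_slices[OF G A])
qed

lemma GST_zero: "0 \<le> w \<Longrightarrow> 0 \<le> p \<Longrightarrow> GST 0 w p = 0"
proof -
  assume "0 \<le> w" "0 \<le> p"
  then have "0 \<le> gst_delta w p" unfolding gst_delta_def by simp
  then show "GST 0 w p = 0" unfolding GST_def by simp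
qed

definition slice_threshold ::
    "nat list \<Rightarrow> (nat \<Rightarrow> nat \<Rightarrow> real) \<Rightarrow> real \<Rightarrow> real \<Rightarrow> nat list \<Rightarrow> nat \<Rightarrow> real \<Rightarrow> real"
  where "slice_threshold ns w p \<tau> idx i x = GST x (\<tau> * w i (lin_idx ns idx)) p"

definition gtsvt_value :: "nat list \<Rightarrow> complex mat list \<Rightarrow> (nat \<Rightarrow> nat \<Rightarrow> real) \<Rightarrow> real \<Rightarrow> real \<Rightarrow>
    nat \<Rightarrow> nat \<Rightarrow> tensor \<Rightarrow> tensor \<Rightarrow> tensor \<Rightarrow> tensor" where
  "gtsvt_value ns Us w p \<tau> m1 m2 U S V = tprod ns Us (tprod ns Us U (transf_inv ns Us
     (tensor_of_slices ns
       (\<lambda>idx. diag_map m1 m2 (slice_threshold ns w p \<tau> idx) (transf ns Us S idx)))))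
     (ttrans ns Us V)"

lemma is_gtsvt_iff:
  "is_gtsvt ns Us w p \<tau> m1 m2 A X \<longleftrightarrow>
   (\<exists>U S V. is_tsvd ns Us m1 m2 A U S V \<and> X = gtsvt_value ns Us w p \<tau> m1 m2 U S V)"
  unfolding is_gtsvt_def gtsvt_value_def diag_map_def slice_threshold_def ..

lemma
  assumes G: "invertible_transforms ns Us" and U: "is_tensor m1 m1 ns U"
    and S: "is_tensor m1 m2 ns S" and V: "is_tensor m2 m2 ns V"
  shows gtsvt_value_tensor: "is_tensor m1 m2 ns (gtsvt_value ns Us w p \<tau> m1 m2 U S V)"
    and transf_gtsvt_value: "valid_idx ns idx \<Longrightarrow>
      transf ns Us (gtsvt_value ns Us w p \<tau> m1 m2 U S V) idx =
      transf ns Us U idx * diag_map m1 m2 (slice_threshold ns w p \<tau> idx) (transf ns Us S idx) *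
      ctrans (transf ns Us V idx)"
proof -
  define D where "D = transf_inv ns Us
    (tensor_of_slices ns
      (\<lambda>idx. diag_map m1 m2 (slice_threshold ns w p \<tau> idx) (transf ns Us S idx)))"
  have D: "is_tensor m1 m2 ns D"
    unfolding D_def by (rule transf_inv_of_slices_tensor[OF G diag_map_carrier_mat])
  have def: "gtsvt_value ns Us w p \<tau> m1 m2 U S V = tprod ns Us (tprod ns Us U D) (ttrans ns Us V)"
    unfolding gtsvt_value_def D_def ..
  show "is_tensor m1 m2 ns (gtsvt_value ns Us w p \<tau> m1 m2 U S V)"
    unfolding def by (rule tprod_tensor[OF G tprod_tensor[OF G U D] ttrans_tensor[OF G V]])
  assume idx: "valid_idx ns idx"
  show "transf ns Us (gtsvt_value ns Us w p \<tau> m1 m2 U S V) idx =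
      transf ns Us U idx * diag_map m1 m2 (slice_threshold ns w p \<tau> idx) (transf ns Us S idx) *
      ctrans (transf ns Us V idx)"
    unfolding def D_def
    by (simp add:
        transf_tprod[OF G tprod_tensor[OF G U D[unfolded D_def]] ttrans_tensor[OF G V] idx]
        transf_tprod[OF G U D[unfolded D_def] idx] transf_ttrans[OF G V idx]
        transf_transf_inv_of_slices[OF G diag_map_carrier_mat idx])
qed

lemma is_gtsvt_tensor:
  assumes G: "invertible_transforms ns Us" and X: "is_gtsvt ns Us w p \<tau> m1 m2 A X"
  shows "is_tensor m1 m2 ns X"
proof -
  obtain U S V where "is_tsvd ns Us m1 m2 A U S V" and X: "X = gtsvt_value ns Us w p \<tau> m1 m2 U S V"
    using X unfolding is_gtsvt_iff by blast
  then have "is_tensor m1 m1 ns U" "is_tensor m1 m2 ns S" "is_tensor m2 m2 ns V"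
    unfolding is_tsvd_def by blast+
  then show ?thesis unfolding X by (rule gtsvt_value_tensor[OF G])
qed

text \<open>A T-SVD may be assembled from arbitrary SVDs of the transformed frontal slices, so a
  correspondence between the slice SVDs of \<open>A\<close> and \<open>A'\<close> that keeps the right factor lifts to the
  values of the operator.\<close>

lemma is_gtsvt_transfer:
  assumes G: "invertible_transforms ns Us" and A: "is_tensor m1 m2 ns A"
    and A': "is_tensor m1' m2 ns A'"
    and X: "is_gtsvt ns Us w p \<tau> m1 m2 A X"
    and transfer: "\<And>idx u s v. valid_idx ns idx \<Longrightarrow> is_svd m1 m2 (transf ns Us A idx) u s v \<Longrightarrow>
      \<exists>u' s'. is_svd m1' m2 (transf ns Us A' idx) u' s' v \<and>
        R idx (u * diag_map m1 m2 (slice_threshold ns w p \<tau> idx) s * ctrans v)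
          (u' * diag_map m1' m2 (slice_threshold ns w p \<tau> idx) s' * ctrans v)"
  obtains X' where "is_gtsvt ns Us w p \<tau> m1' m2 A' X'"
    "\<And>idx. valid_idx ns idx \<Longrightarrow> R idx (transf ns Us X idx) (transf ns Us X' idx)"
proof -
  let ?L = "transf ns Us" and ?G = "\<lambda>m idx. diag_map m m2 (slice_threshold ns w p \<tau> idx)"
  obtain U S V where T: "is_tsvd ns Us m1 m2 A U S V"
    and X: "X = gtsvt_value ns Us w p \<tau> m1 m2 U S V"
    using X unfolding is_gtsvt_iff by blast
  have U: "is_tensor m1 m1 ns U" and S: "is_tensor m1 m2 ns S" and V: "is_tensor m2 m2 ns V"
    and svd: "\<And>idx. valid_idx ns idx \<Longrightarrow> is_svd m1 m2 (?L A idx) (?L U idx) (?L S idx) (?L V idx)"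
    using T by (simp_all add: is_tsvd_iff_slices[OF G A])
  have "\<exists>u' s'. is_svd m1' m2 (?L A' idx) u' s' (?L V idx) \<and>
      R idx (?L X idx) (u' * ?G m1' idx s' * ctrans (?L V idx))" if idx: "valid_idx ns idx" for idx
    unfolding X transf_gtsvt_value[OF G U S V idx] by (rule transfer[OF idx svd[OF idx]])
  then obtain U' S' where T': "is_tsvd ns Us m1' m2 A' U' S' V"
    and slices: "\<And>idx. valid_idx ns idx \<Longrightarrow>
      R idx (?L X idx) (?L U' idx * ?G m1' idx (?L S' idx) * ctrans (?L V idx))"
    by (rule exists_tsvd_of_slices[OF G A' V]) auto
  have U': "is_tensor m1' m1' ns U'" and S': "is_tensor m1' m2 ns S'"
    using T' by (simp_all add: is_tsvd_iff_slices[OF G A'])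
  show ?thesis
  proof (rule that)
    show "is_gtsvt ns Us w p \<tau> m1' m2 A' (gtsvt_value ns Us w p \<tau> m1' m2 U' S' V)"
      unfolding is_gtsvt_iff using T' by blast
    show "R idx (?L X idx) (?L (gtsvt_value ns Us w p \<tau> m1' m2 U' S' V) idx)"
      if "valid_idx ns idx" for idx
      using slices[OF that] by (simp add: transf_gtsvt_value[OF G U' S' V that])
  qed
qed

lemma is_gtsvt_tprod_isometryE:
  assumes G: "invertible_transforms ns Us" and Q: "is_tensor n1 k ns Q" and B: "is_tensor k n2 ns B"
    and QQ: "\<And>idx. valid_idx ns idx \<Longrightarrow> ctrans (transf ns Us Q idx) * transf ns Us Q idx = 1\<^sub>m k"
    and f0: "\<And>idx i. slice_threshold ns w p \<tau> idx i 0 = 0"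
    and X: "is_gtsvt ns Us w p \<tau> n1 n2 (tprod ns Us Q B) X"
  obtains Y where "is_gtsvt ns Us w p \<tau> k n2 B Y" "X = tprod ns Us Q Y"
proof -
  obtain Y where Y: "is_gtsvt ns Us w p \<tau> k n2 B Y"
    and slices: "\<And>idx. valid_idx ns idx \<Longrightarrow>
      transf ns Us Q idx * transf ns Us Y idx = transf ns Us X idx"
  proof (rule is_gtsvt_transfer[OF G tprod_tensor[OF G Q B] B X,
        where R = "\<lambda>idx M M'. transf ns Us Q idx * M' = M"])
    fix idx u s v assume idx: "valid_idx ns idx"
      and "is_svd n1 n2 (transf ns Us (tprod ns Us Q B) idx) u s v"
    then show "\<exists>u' s'. is_svd k n2 (transf ns Us B idx) u' s' v \<and>
      transf ns Us Q idx * (u' * diag_map k n2 (slice_threshold ns w p \<tau> idx) s' * ctrans v) =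
      u * diag_map n1 n2 (slice_threshold ns w p \<tau> idx) s * ctrans v"
      using is_svd_if_is_svd_isometry_mult[where f = "slice_threshold ns w p \<tau> idx",
          OF transf_carrier_mat[OF Q idx] QQ[OF idx] transf_carrier_mat[OF B idx] _ f0]
      by (metis transf_tprod[OF G Q B idx])
  qed auto
  have "X = tprod ns Us Q Y"
    using slices transf_tprod[OF G Q is_gtsvt_tensor[OF G Y]]
    by (intro tensor_eq_if_transf_eq[OF G is_gtsvt_tensor[OF G X]
          tprod_tensor[OF G Q is_gtsvt_tensor[OF G Y]]])
      simp
  with Y that show ?thesis by blast
qed

lemma is_gtsvt_tprod_isometryI:
  assumes G: "invertible_transforms ns Us" and Q: "is_tensor n1 k ns Q" and B: "is_tensor k n2 ns B"
    and QQ: "\<And>idx. valid_idx ns idx \<Longrightarrow> ctrans (transf ns Us Q idx) * transf ns Us Q idx = 1\<^sub>m k"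
    and f0: "\<And>idx i. slice_threshold ns w p \<tau> idx i 0 = 0"
    and Y: "is_gtsvt ns Us w p \<tau> k n2 B Y"
  shows "is_gtsvt ns Us w p \<tau> n1 n2 (tprod ns Us Q B) (tprod ns Us Q Y)"
proof -
  obtain X where X: "is_gtsvt ns Us w p \<tau> n1 n2 (tprod ns Us Q B) X"
    and slices: "\<And>idx. valid_idx ns idx \<Longrightarrow>
      transf ns Us X idx = transf ns Us Q idx * transf ns Us Y idx"
  proof (rule is_gtsvt_transfer[OF G B tprod_tensor[OF G Q B] Y,
        where R = "\<lambda>idx M M'. M' = transf ns Us Q idx * M"])
    fix idx u' s' v assume idx: "valid_idx ns idx" and "is_svd k n2 (transf ns Us B idx) u' s' v"
    then show "\<exists>u s. is_svd n1 n2 (transf ns Us (tprod ns Us Q B) idx) u s v \<and>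
      u * diag_map n1 n2 (slice_threshold ns w p \<tau> idx) s * ctrans v =
      transf ns Us Q idx * (u' * diag_map k n2 (slice_threshold ns w p \<tau> idx) s' * ctrans v)"
      using is_svd_isometry_mult_if_is_svd[where f = "slice_threshold ns w p \<tau> idx",
          OF transf_carrier_mat[OF Q idx] QQ[OF idx] _ f0]
      by (metis transf_tprod[OF G Q B idx])
  qed auto
  have "X = tprod ns Us Q Y"
    using slices transf_tprod[OF G Q is_gtsvt_tensor[OF G Y]]
    by (intro tensor_eq_if_transf_eq[OF G is_gtsvt_tensor[OF G X]
          tprod_tensor[OF G Q is_gtsvt_tensor[OF G Y]]])
      simp
  with X show ?thesis by simp
qed

theorem proposition1:
  fixes ns :: "nat list" and Us :: "complex mat list"
    and n1 n2 k :: nat and \<tau> p :: real and w :: "nat \<Rightarrow> nat \<Rightarrow> real"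
    and Q B :: tensor
  assumes d3: "length ns \<ge> 1"
    and ns_pos: "\<forall>a<length ns. ns ! a > 0"
    and n1: "n1 > 0" and n2: "n2 > 0" and k: "k > 0"
    and Us_len: "length Us = length ns"
    and Us: "\<forall>a<length ns. Us ! a \<in> carrier_mat (ns ! a) (ns ! a) \<and>
               (\<exists>\<alpha>>0. Us ! a * ctrans (Us ! a) = \<alpha> \<cdot>\<^sub>m 1\<^sub>m (ns ! a) \<and>
                       ctrans (Us ! a) * Us ! a = \<alpha> \<cdot>\<^sub>m 1\<^sub>m (ns ! a))"
    and tau: "\<tau> > 0" and p: "0 < p" "p < 1"
    and w: "\<forall>i j. w i j \<ge> 0"
    and Q: "is_tensor n1 k ns Q" "real_tensor ns Q" "part_orth ns Us k Q"
    and B: "is_tensor k n2 ns B" "real_tensor ns B"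
  shows "{X. is_gtsvt ns Us w p \<tau> n1 n2 (tprod ns Us Q B) X}
         = (\<lambda>Y. tprod ns Us Q Y) ` {Y. is_gtsvt ns Us w p \<tau> k n2 B Y}"
proof -
  have G: "invertible_transforms ns Us" by (rule invertible_transforms_if_scaled_unitary[OF Us])
  note QQ = part_orth_slices[OF G Q(1) Q(3)]
  have f0: "slice_threshold ns w p \<tau> idx i 0 = 0" for idx i
    unfolding slice_threshold_def using tau w p by (intro GST_zero) auto
  show ?thesis
  proof (intro equalityI subsetI)
    fix X assume "X \<in> {X. is_gtsvt ns Us w p \<tau> n1 n2 (tprod ns Us Q B) X}"
    then obtain Y where "is_gtsvt ns Us w p \<tau> k n2 B Y" "X = tprod ns Us Q Y"
      using is_gtsvt_tprod_isometryE[OF G Q(1) B(1) QQ f0] by blast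
    then show "X \<in> (\<lambda>Y. tprod ns Us Q Y) ` {Y. is_gtsvt ns Us w p \<tau> k n2 B Y}" by blast
  qed (use is_gtsvt_tprod_isometryI[OF G Q(1) B(1) QQ f0] in blast)
qed

end
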